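(* Let $\boldsymbol{\xi}_1,\dots,\boldsymbol{\xi}_T$ be i.i.d. standard Gaussian random vectors in $\mathbb{R}^n$. With probability at least $1-\exp\!\left(T\log(2n)-\frac{n}{32}\right)$, the following holds: for every $\mathbf{r}\in\mathbb{R}^T$ there exists a subset $\mathcal{L}\subseteq[n]$ with $|\mathcal{L}|\ge\frac{n}{20}$ and \[ \min_{l\in\mathcal{L}}\Big(\sum_{j=1}^T r_j\boldsymbol{\xi}_j\Big)_l\ \ge\ \frac12\|\mathbf{r}\|_2. \]
   Context: $(\mathbf{x})_l$ denotes the $l$-th entry of a vector; $[n]=\{1,\dots,n\}$; $\log$ is the natural logarithm. *)

theory Defs
  imports "HOL-Probability.Probability"
begin

definition std_gauss :: "real measure" where
  "std_gauss = density lborel std_normal_density"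

text \<open>Joint law of T i.i.d. standard Gaussian vectors in R^n:
  the sample point is xi with xi (j,l) = l-th entry of the j-th vector
  (j < T, l < n), all entries i.i.d. standard normal.\<close>
definition gauss_family :: "nat \<Rightarrow> nat \<Rightarrow> ((nat \<times> nat) \<Rightarrow> real) measure" where
  "gauss_family T n = PiM ({..<T} \<times> {..<n}) (\<lambda>_. std_gauss)"

definition good_event :: "nat \<Rightarrow> nat \<Rightarrow> ((nat \<times> nat) \<Rightarrow> real) set" where
  "good_event T n = {xi \<in> space (gauss_family T n).
     \<forall>r :: nat \<Rightarrow> real. \<exists>L \<subseteq> {..<n}. real (card L) \<ge> real n / 20 \<and>
       (\<forall>l\<in>L. (\<Sum>j<T. r j * xi (j, l)) \<ge> sqrt (\<Sum>j<T. (r j)\<^sup>2) / 2)}"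

end

theory Submission
  imports Defs "HOL-Analysis.Harmonic_Numbers"
begin

text \<open>
  By homogeneity only unit vectors \<open>r\<close> matter. Each is approximated coordinatewise within
  \<open>1/m\<close>, \<open>m = n - 1\<close>, by a point \<open>u\<close> of the grid \<open>{k/m. \<bar>k\<bar> \<le> m}\<^sup>T\<close>, which has at most
  \<open>(2n)\<^sup>T\<close> points, and \<open>\<parallel>u\<parallel>\<^sup>2 \<ge> 49/50\<close>. For a fixed such \<open>u\<close>, entry \<open>l\<close> of \<open>\<Sum>\<^sub>j u\<^sub>j \<xi>\<^sub>j\<close> is
  \<open>N(0, \<parallel>u\<parallel>\<^sup>2)\<close>, so it exceeds \<open>11/20\<close> with probability at least \<open>1/4\<close>, while by Markov the
  column \<open>(\<xi>\<^sub>j(l))\<^sub>j\<close> has squared norm above \<open>K = m\<^sup>2/(400T)\<close> with probability at most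
  \<open>T/K \<le> 1/50\<close>. The \<open>n\<close> entries are independent, so by Hoeffding the probability that fewer
  than \<open>n/20\<close> of them are good in both senses is at most \<open>exp (-n/32)\<close>, and a union bound over
  the grid gives failure probability at most \<open>(2n)\<^sup>T exp (-n/32)\<close>. Outside the failure event,
  Cauchy-Schwarz bounds the change of a good entry when \<open>u\<close> is replaced by \<open>r\<close> by
  \<open>\<surd>(TK)/m = 1/20\<close>, leaving it at least \<open>1/2\<close>.
\<close>

lemma prob_space_std_gauss: "prob_space std_gauss"
  unfolding std_gauss_def using prob_space_normal_density[of 1 0] by simp

lemma sets_std_gauss [simp]: "sets std_gauss = sets borel"
  by (simp add: std_gauss_def)

lemma space_std_gauss [simp]: "space std_gauss = UNIV"
  by (simp add: std_gauss_def)

lemma emeasure_std_gauss: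
  "A \<in> sets borel \<Longrightarrow>
    emeasure std_gauss A = (\<integral>\<^sup>+x. ennreal (std_normal_density x) * indicator A x \<partial>lborel)"
  unfolding std_gauss_def by (subst emeasure_density) auto

lemma measure_std_gauss_atMost_eq_atLeast: "measure std_gauss {..0} = measure std_gauss {0..}"
proof -
  have "emeasure std_gauss {..0}
      = (\<integral>\<^sup>+x. ennreal (std_normal_density x) * indicator {..0} x \<partial>distr lborel borel uminus)"
    by (simp add: emeasure_std_gauss lborel_distr_uminus)
  also have "\<dots> = (\<integral>\<^sup>+x. ennreal (std_normal_density (-x)) * indicator {..0} (-x) \<partial>lborel)"
    by (subst nn_integral_distr) auto
  also have "\<dots> = emeasure std_gauss {0..}"
    by (simp add: emeasure_std_gauss std_normal_density_def indicator_def)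
  finally show ?thesis
    by (simp add: measure_def)
qed

lemma measure_std_gauss_atLeast_0_ge: "1/2 \<le> measure std_gauss {0..}"
proof -
  interpret prob_space std_gauss by (rule prob_space_std_gauss)
  have "{..0} \<union> {0<..} = (UNIV :: real set)"
    by auto
  then have "1 = measure std_gauss ({..0} \<union> {0<..})"
    using prob_space by simp
  also have "\<dots> \<le> measure std_gauss {..0} + measure std_gauss {0<..}"
    by (rule measure_Un_le) auto
  also have "measure std_gauss {0<..} \<le> measure std_gauss {0..}"
    by (rule finite_measure_mono) auto
  finally show ?thesis
    using measure_std_gauss_atMost_eq_atLeast by simp
qed

lemma measure_std_gauss_interval_le:
  assumes "0 \<le> a"
  shows "measure std_gauss {0..<a} \<le> a / sqrt (2 * pi)"
proof -
  interpret prob_space std_gauss by (rule prob_space_std_gauss)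
  have "emeasure std_gauss {0..<a} \<le> (\<integral>\<^sup>+x. ennreal (1 / sqrt (2 * pi)) * indicator {0..<a} x \<partial>lborel)"
    unfolding emeasure_std_gauss[OF atLeastLessThan_borel]
    by (intro nn_integral_mono) (auto simp: indicator_def std_normal_density_def divide_le_eq)
  also have "\<dots> = ennreal (a / sqrt (2 * pi))"
    using assms by (simp add: nn_integral_cmult_indicator ennreal_mult[symmetric])
  finally show ?thesis
    using assms by (simp add: emeasure_eq_measure ennreal_le_iff)
qed

lemma measure_std_gauss_atLeast_ge:
  assumes "0 \<le> a"
  shows "1/2 - a / sqrt (2 * pi) \<le> measure std_gauss {a..}"
proof -
  interpret prob_space std_gauss by (rule prob_space_std_gauss)
  have "measure std_gauss {0..} \<le> measure std_gauss ({0..<a} \<union> {a..})"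
    by (rule finite_measure_mono) auto
  also have "\<dots> \<le> measure std_gauss {0..<a} + measure std_gauss {a..}"
    by (rule measure_Un_le) auto
  finally show ?thesis
    using measure_std_gauss_atLeast_0_ge measure_std_gauss_interval_le[OF assms] by linarith
qed

abbreviation std_gauss_PiM :: "'i set \<Rightarrow> ('i \<Rightarrow> real) measure" where
  "std_gauss_PiM I \<equiv> PiM I (\<lambda>_. std_gauss)"

lemma prob_space_std_gauss_PiM: "prob_space (std_gauss_PiM I)"
  by (rule prob_space_PiM) (rule prob_space_std_gauss)

lemma sets_std_gauss_PiM: "sets (std_gauss_PiM I) = sets (PiM I (\<lambda>_. borel))"
  by (rule sets_PiM_cong) auto

lemma measurable_std_gauss_PiM_component [measurable]:
  "i \<in> I \<Longrightarrow> (\<lambda>\<omega>. \<omega> i) \<in> borel_measurable (std_gauss_PiM I)"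
  by (simp add: measurable_cong_sets[OF sets_std_gauss_PiM refl])

lemma distr_std_gauss_PiM_component:
  "i \<in> I \<Longrightarrow> distr (std_gauss_PiM I) borel (\<lambda>\<omega>. \<omega> i) = std_gauss"
proof -
  assume "i \<in> I"
  have "distr (std_gauss_PiM I) borel (\<lambda>\<omega>. \<omega> i) = distr (std_gauss_PiM I) std_gauss (\<lambda>\<omega>. \<omega> i)"
    by (rule distr_cong) auto
  also have "\<dots> = std_gauss"
    using \<open>i \<in> I\<close> by (intro distr_PiM_component prob_space_std_gauss)
  finally show ?thesis .
qed

lemma distributed_std_gauss_PiM_component:
  "i \<in> I \<Longrightarrow> distributed (std_gauss_PiM I) lborel (\<lambda>\<omega>. \<omega> i) std_normal_density"
proof -
  assume "i \<in> I"
  have "distr (std_gauss_PiM I) lborel (\<lambda>\<omega>. \<omega> i) = distr (std_gauss_PiM I) borel (\<lambda>\<omega>. \<omega> i)"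
    by (rule distr_cong) auto
  with \<open>i \<in> I\<close> show ?thesis
    unfolding distributed_def by (simp add: distr_std_gauss_PiM_component) (simp add: std_gauss_def)
qed

lemma indep_vars_std_gauss_PiM_components:
  assumes "finite I"
  shows "prob_space.indep_vars (std_gauss_PiM I) (\<lambda>_. borel) (\<lambda>i \<omega>. \<omega> i) I"
proof -
  interpret prob_space "std_gauss_PiM I" by (rule prob_space_std_gauss_PiM)
  show ?thesis
  proof (cases "I = {}")
    case True
    then show ?thesis
      unfolding indep_vars_def indep_sets_def by simp
  next
    case False
    have "distr (std_gauss_PiM I) (PiM I (\<lambda>_. borel)) (\<lambda>\<omega>. restrict \<omega> I) = std_gauss_PiM I"
      by (subst distr_cong[of _ _ _ "std_gauss_PiM I"]) (auto simp: sets_std_gauss_PiM space_PiM)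
    also have "\<dots> = PiM I (\<lambda>i. distr (std_gauss_PiM I) borel (\<lambda>\<omega>. \<omega> i))"
      by (intro PiM_cong) (simp_all add: distr_std_gauss_PiM_component)
    finally show ?thesis
      using False by (subst indep_vars_iff_distr_eq_PiM') auto
  qed
qed

lemma distributed_std_gauss_PiM_lincomb:
  assumes "finite I" "J \<subseteq> I" and pos: "0 < (\<Sum>i\<in>J. (u i)\<^sup>2)"
  shows "distributed (std_gauss_PiM I) lborel (\<lambda>\<omega>. \<Sum>i\<in>J. u i * \<omega> i)
           (normal_density 0 (sqrt (\<Sum>i\<in>J. (u i)\<^sup>2)))"
proof -
  interpret prob_space "std_gauss_PiM I" by (rule prob_space_std_gauss_PiM)
  define S where "S = {i \<in> J. u i \<noteq> 0}"
  have "finite J"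
    using assms finite_subset by blast
  then have S: "finite S" "S \<subseteq> I"
    using assms by (auto simp: S_def)
  have sum_S: "(\<Sum>i\<in>J. f i) = (\<Sum>i\<in>S. f i)" if "\<And>i. u i = 0 \<Longrightarrow> f i = 0" for f :: "'a \<Rightarrow> real"
    by (rule sum.mono_neutral_right) (use \<open>finite J\<close> that in \<open>auto simp: S_def\<close>)
  have "S \<noteq> {}"
    using pos sum_S[of "\<lambda>i. (u i)\<^sup>2"] by auto
  have "indep_vars (\<lambda>_. borel) (\<lambda>i \<omega>. u i * \<omega> i) S"
    using indep_vars_compose2[OF indep_vars_subset[OF indep_vars_std_gauss_PiM_components S(2)],
        of "\<lambda>i x. u i * x" "\<lambda>_. borel"] assms(1) by simp
  moreover have "distributed (std_gauss_PiM I) lborel (\<lambda>\<omega>. u i * \<omega> i) (normal_density 0 \<bar>u i\<bar>)"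
    if "i \<in> S" for i
    using normal_density_affine[of "\<lambda>\<omega>. \<omega> i" 0 1 "u i" 0] that S(2)
      distributed_std_gauss_PiM_component[of i I] by (auto simp: S_def)
  ultimately have "distributed (std_gauss_PiM I) lborel (\<lambda>\<omega>. \<Sum>i\<in>S. u i * \<omega> i)
      (normal_density (\<Sum>i\<in>S. 0) (sqrt (\<Sum>i\<in>S. \<bar>u i\<bar>\<^sup>2)))"
    using S \<open>S \<noteq> {}\<close> by (intro sum_indep_normal) (auto simp: S_def)
  then show ?thesis
    by (simp add: sum_S)
qed

lemma prob_std_gauss_PiM_lincomb_ge:
  fixes u :: "'i \<Rightarrow> real"
  assumes "finite I" "J \<subseteq> I" "0 \<le> a"
  defines "\<sigma> \<equiv> sqrt (\<Sum>i\<in>J. (u i)\<^sup>2)"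
  assumes "0 < \<sigma>"
  shows "1/2 - a / (\<sigma> * sqrt (2 * pi))
           \<le> prob_space.prob (std_gauss_PiM I) {\<omega> \<in> space (std_gauss_PiM I). a \<le> (\<Sum>i\<in>J. u i * \<omega> i)}"
proof -
  interpret prob_space "std_gauss_PiM I" by (rule prob_space_std_gauss_PiM)
  let ?X = "\<lambda>\<omega>. \<Sum>i\<in>J. u i * \<omega> i"
  have "0 < (\<Sum>i\<in>J. (u i)\<^sup>2)"
    using \<open>0 < \<sigma>\<close> by (simp add: \<sigma>_def)
  then have "distributed (std_gauss_PiM I) lborel ?X (normal_density 0 \<sigma>)"
    unfolding \<sigma>_def by (rule distributed_std_gauss_PiM_lincomb[OF assms(1,2)])
  then have Z: "distributed (std_gauss_PiM I) lborel (\<lambda>\<omega>. ?X \<omega> / \<sigma>) std_normal_density"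
    using normal_standard_normal_convert[OF \<open>0 < \<sigma>\<close>] by simp
  have "{\<omega> \<in> space (std_gauss_PiM I). a \<le> ?X \<omega>} = (\<lambda>\<omega>. ?X \<omega> / \<sigma>) -` {a / \<sigma>..} \<inter> space (std_gauss_PiM I)"
    using \<open>0 < \<sigma>\<close> by (auto simp: divide_le_eq le_divide_eq)
  also have "emeasure (std_gauss_PiM I) \<dots> = emeasure std_gauss {a / \<sigma>..}"
    by (simp add: distributed_emeasure[OF Z] emeasure_std_gauss)
  finally have "prob {\<omega> \<in> space (std_gauss_PiM I). a \<le> ?X \<omega>} = measure std_gauss {a / \<sigma>..}"
    by (simp add: measure_def)
  moreover have "1/2 - (a / \<sigma>) / sqrt (2 * pi) \<le> measure std_gauss {a / \<sigma>..}"
    using assms by (intro measure_std_gauss_atLeast_ge) simp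
  ultimately show ?thesis
    by simp
qed

lemma prob_std_gauss_PiM_sum_squares_ge:
  assumes "finite J" "J \<subseteq> I" "0 < K"
  shows "prob_space.prob (std_gauss_PiM I) {\<omega> \<in> space (std_gauss_PiM I). K \<le> (\<Sum>i\<in>J. (\<omega> i)\<^sup>2)}
           \<le> card J / K"
proof -
  interpret prob_space "std_gauss_PiM I" by (rule prob_space_std_gauss_PiM)
  have square: "integrable (std_gauss_PiM I) (\<lambda>\<omega>. (\<omega> i)\<^sup>2) \<and> expectation (\<lambda>\<omega>. (\<omega> i)\<^sup>2) = 1"
    if "i \<in> I" for i
  proof -
    note D = distributed_std_gauss_PiM_component[OF that]
    have "integrable lborel (\<lambda>x. std_normal_density x * x\<^sup>2)"
      using integrable_std_normal_moment[of 2] by simp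
    then have "integrable (std_gauss_PiM I) (\<lambda>\<omega>. (\<omega> i)\<^sup>2)"
      using distributed_integrable[OF D, of "\<lambda>x. x\<^sup>2"] by simp
    moreover have "expectation (\<lambda>\<omega>. (\<omega> i)\<^sup>2) = 1"
      using distributed_integral[OF D, of "\<lambda>x. x\<^sup>2"] integral_std_normal_moment_even[of 1] by simp
    ultimately show ?thesis ..
  qed
  have int: "integrable (std_gauss_PiM I) (\<lambda>\<omega>. \<Sum>i\<in>J. (\<omega> i)\<^sup>2)"
    using square assms(2) by (intro Bochner_Integration.integrable_sum) blast
  have "expectation (\<lambda>\<omega>. \<Sum>i\<in>J. (\<omega> i)\<^sup>2) = (\<Sum>i\<in>J. 1)"
    using square assms(2)
    by (subst Bochner_Integration.integral_sum) (blast, intro sum.cong, blast+)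
  moreover have "AE \<omega> in std_gauss_PiM I. 0 \<le> (\<Sum>i\<in>J. (\<omega> i)\<^sup>2)"
    by (simp add: sum_nonneg)
  then have "prob {\<omega> \<in> space (std_gauss_PiM I). K \<le> (\<Sum>i\<in>J. (\<omega> i)\<^sup>2)}
      \<le> expectation (\<lambda>\<omega>. \<Sum>i\<in>J. (\<omega> i)\<^sup>2) / K"
    by (rule integral_Markov_inequality_measure[OF int sets.top _ assms(3)])
  ultimately show ?thesis
    by simp
qed

lemma (in prob_space) prob_count_le_Hoeffding:
  assumes "finite L" "L \<noteq> {}" "0 \<le> t"
    and indep: "indep_vars (\<lambda>_. borel) (\<lambda>l \<omega>. of_bool (P l \<omega>) :: real) L"
    and p: "\<And>l. l \<in> L \<Longrightarrow> p \<le> prob {\<omega> \<in> space M. P l \<omega>}"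
  shows "prob {\<omega> \<in> space M. real (card {l \<in> L. P l \<omega>}) \<le> p * card L - t} \<le> exp (-2 * t\<^sup>2 / card L)"
proof -
  let ?X = "\<lambda>l \<omega>. of_bool (P l \<omega>) :: real"
  interpret Hoeffding_ineq M L ?X "\<lambda>_. 0" "\<lambda>_. 1" "\<Sum>l\<in>L. expectation (?X l)"
    by unfold_locales (use assms in auto)
  have "p \<le> expectation (?X l)" if "l \<in> L" for l
  proof -
    let ?S = "{\<omega> \<in> space M. P l \<omega>}"
    have "?S \<in> sets M"
      using measurable_sets[OF random_variable[OF that], of "{1}"]
      by (simp add: vimage_def Int_def conj_commute)
    have "expectation (?X l) = expectation (indicator ?S)"
      by (rule Bochner_Integration.integral_cong) (auto simp: indicator_def)
    also have "\<dots> = prob ?S"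
      using \<open>?S \<in> sets M\<close> by simp
    finally show ?thesis
      using p[OF that] by simp
  qed
  then have "p * card L \<le> (\<Sum>l\<in>L. expectation (?X l))"
    using sum_mono[of L "\<lambda>_. p"] by (simp add: mult.commute)
  then have "prob {\<omega> \<in> space M. real (card {l \<in> L. P l \<omega>}) \<le> p * card L - t}
      \<le> prob {\<omega> \<in> space M. (\<Sum>l\<in>L. ?X l \<omega>) \<le> (\<Sum>l\<in>L. expectation (?X l)) - t}"
  proof (intro finite_measure_mono subsetI)
    fix \<omega> assume "\<omega> \<in> {\<omega> \<in> space M. real (card {l \<in> L. P l \<omega>}) \<le> p * card L - t}"
    then show "\<omega> \<in> {\<omega> \<in> space M. (\<Sum>l\<in>L. ?X l \<omega>) \<le> (\<Sum>l\<in>L. expectation (?X l)) - t}"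
      using \<open>finite L\<close> \<open>p * card L \<le> _\<close> by (simp add: Int_def conj_commute)
  qed measurable
  also have "\<dots> \<le> exp (-2 * t\<^sup>2 / (\<Sum>l\<in>L. (1 - 0)\<^sup>2))"
    using assms by (intro Hoeffding_ineq_le) (simp_all add: card_gt_0_iff)
  finally show ?thesis
    by simp
qed

lemma indep_vars_std_gauss_PiM_blocks:
  assumes "finite I" "\<And>l. l \<in> L \<Longrightarrow> B l \<subseteq> I" "disjoint_family_on B L"
    and f: "\<And>l. l \<in> L \<Longrightarrow> f l \<in> borel_measurable (PiM (B l) (\<lambda>_. borel))"
  shows "prob_space.indep_vars (std_gauss_PiM I) (\<lambda>_. borel) (\<lambda>l \<omega>. f l (restrict \<omega> (B l))) L"
proof -
  interpret prob_space "std_gauss_PiM I" by (rule prob_space_std_gauss_PiM)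
  have "indep_vars (\<lambda>l. PiM (B l) (\<lambda>_. borel)) (\<lambda>l \<omega>. restrict (\<lambda>i. \<omega> i) (B l)) L"
    using indep_vars_std_gauss_PiM_components[OF assms(1)] assms(2,3) by (rule indep_vars_restrict)
  from indep_vars_compose2[OF this f] show ?thesis
    by simp
qed

lemma prob_space_gauss_family: "prob_space (gauss_family T n)"
  unfolding gauss_family_def by (rule prob_space_std_gauss_PiM)

definition good_entry :: "nat \<Rightarrow> (nat \<Rightarrow> real) \<Rightarrow> real \<Rightarrow> (nat \<times> nat \<Rightarrow> real) \<Rightarrow> nat \<Rightarrow> bool" where
  "good_entry T u K \<xi> l \<longleftrightarrow> 11/20 \<le> (\<Sum>j<T. u j * \<xi> (j, l)) \<and> (\<Sum>j<T. (\<xi> (j, l))\<^sup>2) \<le> K"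

lemma pred_good_entry:
  assumes "{..<T} \<times> {l} \<subseteq> B"
  shows "Measurable.pred (PiM B (\<lambda>_. borel)) (\<lambda>\<xi>. good_entry T u K \<xi> l)"
proof -
  have component: "(\<lambda>\<xi>. \<xi> (j, l)) \<in> borel_measurable (PiM B (\<lambda>_. borel))" if "j < T" for j
    using assms that by (intro measurable_component_singleton) auto
  have lincomb: "(\<lambda>\<xi>. \<Sum>j<T. u j * \<xi> (j, l)) \<in> borel_measurable (PiM B (\<lambda>_. borel))"
    by (rule borel_measurable_sum, rule borel_measurable_times[OF measurable_const component]) auto
  have squares: "(\<lambda>\<xi>. \<Sum>j<T. (\<xi> (j, l) :: real)\<^sup>2) \<in> borel_measurable (PiM B (\<lambda>_. borel))"
    by (rule borel_measurable_sum, rule borel_measurable_power[OF component]) simp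
  have "{\<xi> \<in> space (PiM B (\<lambda>_. borel)). good_entry T u K \<xi> l}
      = {\<xi> \<in> space (PiM B (\<lambda>_. borel)). 11/20 \<le> (\<Sum>j<T. u j * \<xi> (j, l))}
        \<inter> {\<xi> \<in> space (PiM B (\<lambda>_. borel)). (\<Sum>j<T. (\<xi> (j, l))\<^sup>2) \<le> K}"
    by (auto simp: good_entry_def)
  also have "\<dots> \<in> sets (PiM B (\<lambda>_. borel))"
    by (intro sets.Int borel_measurable_le lincomb squares measurable_const) simp_all
  finally show ?thesis
    by (simp add: pred_def)
qed

lemma sets_good_entry:
  assumes "l < n"
  shows "{\<xi> \<in> space (gauss_family T n). good_entry T u K \<xi> l} \<in> sets (gauss_family T n)"
proof -
  have "Measurable.pred (gauss_family T n) (\<lambda>\<xi>. good_entry T u K \<xi> l)"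
    using pred_good_entry[of T l "{..<T} \<times> {..<n}" u K] assms
    unfolding gauss_family_def by (auto simp: measurable_cong_sets[OF sets_std_gauss_PiM refl])
  then show ?thesis
    by measurable
qed

lemma tail_threshold_le:
  assumes "49/50 \<le> (s :: real)"
  shows "(11/20) / (sqrt s * sqrt (2 * pi)) \<le> 1/4"
proof -
  have "49/50 * 6 \<le> s * (2 * pi)"
    using assms pi_gt3 by (intro mult_mono) auto
  then have "(11/5)\<^sup>2 \<le> s * (2 * pi)"
    by (simp add: power2_eq_square)
  then have "11/5 \<le> sqrt s * sqrt (2 * pi)"
    unfolding real_sqrt_mult[symmetric] by (rule real_le_rsqrt)
  then show ?thesis
    using assms by (simp add: divide_le_eq)
qed

lemma prob_good_entry_ge:
  assumes l: "l < n" and u: "49/50 \<le> (\<Sum>j<T. (u j)\<^sup>2)" and K: "0 < K" "T / K \<le> 1/50"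
  shows "23/100 \<le> prob_space.prob (gauss_family T n) {\<xi> \<in> space (gauss_family T n). good_entry T u K \<xi> l}"
proof -
  let ?M = "gauss_family T n"
  interpret prob_space ?M by (rule prob_space_gauss_family)
  define J where "J = (\<lambda>j. (j, l)) ` {..<T}"
  have J: "J \<subseteq> {..<T} \<times> {..<n}" "finite J" "card J = T"
    using l by (auto simp: J_def card_image inj_on_def)
  have sum_J: "(\<Sum>i\<in>J. f i) = (\<Sum>j<T. f (j, l))" for f :: "nat \<times> nat \<Rightarrow> real"
    unfolding J_def by (subst sum.reindex) (auto simp: inj_on_def)
  define \<sigma> where "\<sigma> = sqrt (\<Sum>j<T. (u j)\<^sup>2)"
  have "0 < \<sigma>"
    using u by (simp add: \<sigma>_def)
  let ?A = "{\<xi> \<in> space ?M. 11/20 \<le> (\<Sum>j<T. u j * \<xi> (j, l))}"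
  let ?C = "{\<xi> \<in> space ?M. K \<le> (\<Sum>j<T. (\<xi> (j, l))\<^sup>2)}"
  let ?G = "{\<xi> \<in> space ?M. good_entry T u K \<xi> l}"
  have component: "(\<lambda>\<xi>. \<xi> (j, l)) \<in> borel_measurable ?M" if "j < T" for j
    using l that unfolding gauss_family_def by (intro measurable_std_gauss_PiM_component) auto
  have "(\<lambda>\<xi>. \<Sum>j<T. (\<xi> (j, l))\<^sup>2) \<in> borel_measurable ?M"
    by (rule borel_measurable_sum, rule borel_measurable_power[OF component]) auto
  from borel_measurable_le[OF borel_measurable_const[of K] this]
  have sets: "?G \<in> sets ?M" "?C \<in> sets ?M"
    by (simp_all only: sets_good_entry[OF l])
  have "1/2 - (11/20) / (\<sigma> * sqrt (2 * pi)) \<le> prob ?A"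
    using prob_std_gauss_PiM_lincomb_ge[OF _ J(1), of "11/20" "\<lambda>i. u (fst i)"] \<open>0 < \<sigma>\<close>
    unfolding gauss_family_def by (simp add: sum_J \<sigma>_def)
  moreover have "(11/20) / (\<sigma> * sqrt (2 * pi)) \<le> 1/4"
    unfolding \<sigma>_def using u by (rule tail_threshold_le)
  moreover have "prob ?C \<le> 1/50"
    using prob_std_gauss_PiM_sum_squares_ge[OF J(2,1) K(1)] K(2)
    unfolding gauss_family_def by (simp only: sum_J J(3))
  moreover have "prob ?A \<le> prob ?G + prob ?C"
  proof -
    have "?A \<subseteq> ?G \<union> ?C"
      by (auto simp: good_entry_def)
    then have "prob ?A \<le> prob (?G \<union> ?C)"
      using sets by (intro finite_measure_mono sets.Un)
    also have "\<dots> \<le> prob ?G + prob ?C"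
      using sets by (rule measure_Un_le)
    finally show ?thesis .
  qed
  ultimately show ?thesis
    by linarith
qed

lemma borel_measurable_card_good_entries:
  "(\<lambda>\<xi>. real (card {l \<in> {..<n}. good_entry T u K \<xi> l})) \<in> borel_measurable (gauss_family T n)"
proof -
  have "real (card {l \<in> {..<n}. good_entry T u K \<xi> l}) = (\<Sum>l<n. of_bool (good_entry T u K \<xi> l))" for \<xi>
  proof -
    have "{l \<in> {..<n}. good_entry T u K \<xi> l} = {..<n} \<inter> {l. good_entry T u K \<xi> l}"
      by blast
    moreover have "(\<Sum>l<n. of_bool (good_entry T u K \<xi> l))
        = (of_nat (card ({..<n} \<inter> {l. good_entry T u K \<xi> l})) :: real)"
      by (rule sum_of_bool_eq) simp_all
    ultimately show ?thesis
      by (simp only:)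
  qed
  moreover have "(\<lambda>\<xi>. \<Sum>l<n. of_bool (good_entry T u K \<xi> l) :: real) \<in> borel_measurable (gauss_family T n)"
    using sets_good_entry
    by (intro borel_measurable_sum measurable_compose[OF _ measurable_of_bool]) (simp add: pred_def)
  ultimately show ?thesis
    by presburger
qed

definition few_good_entries :: "nat \<Rightarrow> nat \<Rightarrow> (nat \<Rightarrow> real) \<Rightarrow> real \<Rightarrow> (nat \<times> nat \<Rightarrow> real) set" where
  "few_good_entries T n u K =
     {\<xi> \<in> space (gauss_family T n). real (card {l \<in> {..<n}. good_entry T u K \<xi> l}) < n / 20}"

lemma sets_few_good_entries: "few_good_entries T n u K \<in> sets (gauss_family T n)"
  unfolding few_good_entries_def
  by (rule borel_measurable_less[OF borel_measurable_card_good_entries borel_measurable_const])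

lemma prob_few_good_entries_le:
  assumes n: "0 < n" and u: "49/50 \<le> (\<Sum>j<T. (u j)\<^sup>2)" and K: "0 < K" "T / K \<le> 1/50"
  shows "prob_space.prob (gauss_family T n) (few_good_entries T n u K) \<le> exp (- real n / 32)"
proof -
  let ?M = "gauss_family T n"
  interpret prob_space ?M by (rule prob_space_gauss_family)
  let ?B = "\<lambda>l. {..<T} \<times> {l}"
  let ?count = "\<lambda>\<xi>. real (card {l \<in> {..<n}. good_entry T u K \<xi> l})"
  have "indep_vars (\<lambda>_. borel) (\<lambda>l \<xi>. of_bool (good_entry T u K (restrict \<xi> (?B l)) l) :: real) {..<n}"
    unfolding gauss_family_def
  proof (rule indep_vars_std_gauss_PiM_blocks)
    show "disjoint_family_on ?B {..<n}"
      by (auto simp: disjoint_family_on_def)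
    show "(\<lambda>\<xi>. of_bool (good_entry T u K \<xi> l) :: real) \<in> borel_measurable (PiM (?B l) (\<lambda>_. borel))" for l
      using pred_good_entry[of T l "?B l" u K] by (intro measurable_compose[OF _ measurable_of_bool]) simp
  qed auto
  moreover have "good_entry T u K (restrict \<xi> (?B l)) l = good_entry T u K \<xi> l" for \<xi> l
    by (simp add: good_entry_def)
  ultimately have "indep_vars (\<lambda>_. borel) (\<lambda>l \<xi>. of_bool (good_entry T u K \<xi> l) :: real) {..<n}"
    by simp
  then have "prob {\<xi> \<in> space ?M. ?count \<xi> \<le> 23/100 * card {..<n} - n / 8}
      \<le> exp (-2 * (n / 8)\<^sup>2 / card {..<n})"
    using prob_good_entry_ge[OF _ u K] n by (intro prob_count_le_Hoeffding) auto
  moreover have "exp (-2 * (n / 8)\<^sup>2 / card {..<n}) = exp (- real n / 32)"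
    using n by (simp add: power2_eq_square)
  moreover have "prob (few_good_entries T n u K)
      \<le> prob {\<xi> \<in> space ?M. ?count \<xi> \<le> 23/100 * card {..<n} - n / 8}"
  proof (rule finite_measure_mono)
    show "{\<xi> \<in> space ?M. ?count \<xi> \<le> 23/100 * card {..<n} - n / 8} \<in> events"
      by (rule borel_measurable_le[OF borel_measurable_card_good_entries borel_measurable_const])
    have "c < n / 20 \<Longrightarrow> c \<le> 23/100 * card {..<n} - n / 8" for c :: real
      by simp
    then show "few_good_entries T n u K \<subseteq> {\<xi> \<in> space ?M. ?count \<xi> \<le> 23/100 * card {..<n} - n / 8}"
      unfolding few_good_entries_def by (intro Collect_mono) blast
  qed
  ultimately show ?thesis
    by linarith
qed

definition grid :: "nat \<Rightarrow> real set" where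
  "grid m = (\<lambda>k::int. k / m) ` {-int m..int m}"

lemma finite_grid: "finite (grid m)"
  by (simp add: grid_def)

lemma card_grid_le: "card (grid m) \<le> 2 * m + 1"
  using card_image_le[of "{-int m..int m}" "\<lambda>k::int. k / m"] by (simp add: grid_def)

lemma card_PiE_grid_le: "finite I \<Longrightarrow> card (I \<rightarrow>\<^sub>E grid m) \<le> (2 * m + 1) ^ card I"
  using power_mono[OF card_grid_le[of m], of "card I"] by (simp add: card_PiE)

lemma grid_approx:
  fixes x :: real
  assumes m: "0 < m" and x: "\<bar>x\<bar> \<le> 1"
  obtains y where "y \<in> grid m" "\<bar>x - y\<bar> \<le> 1 / m" "x\<^sup>2 - 2 / m \<le> y\<^sup>2"
proof -
  define k where "k = \<lfloor>\<bar>x\<bar> * m\<rfloor>"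
  define s :: int where "s = (if 0 \<le> x then 1 else -1)"
  have x_eq: "x = s * \<bar>x\<bar>"
    by (simp add: s_def)
  have k: "0 \<le> k" "k \<le> m" "\<bar>x\<bar> - 1 / m \<le> k / m" "k / m \<le> \<bar>x\<bar>"
  proof -
    have "\<bar>x\<bar> * m \<le> m"
      using x m by (simp add: mult_left_le_one_le)
    then show "0 \<le> k" "k \<le> m"
      unfolding k_def by (simp_all add: floor_le_iff)
    have "\<bar>x\<bar> * m - 1 \<le> k" "k \<le> \<bar>x\<bar> * m"
      unfolding k_def by linarith+
    with m show "\<bar>x\<bar> - 1 / m \<le> k / m" "k / m \<le> \<bar>x\<bar>"
      by (simp_all add: divide_le_eq le_divide_eq left_diff_distrib)
  qed
  show ?thesis
  proof
    have "s * k \<in> {-int m..int m}"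
      using k(1,2) by (auto simp: s_def)
    then show "of_int (s * k) / m \<in> grid m"
      unfolding grid_def by blast
    have "\<bar>x - of_int (s * k) / m\<bar> = \<bar>x\<bar> - k / m"
      using k(4) by (subst x_eq) (auto simp: s_def abs_if)
    then show "\<bar>x - of_int (s * k) / m\<bar> \<le> 1 / m"
      using k(3) by simp
    have "x\<^sup>2 - (of_int (s * k) / m)\<^sup>2 = (\<bar>x\<bar> - k / m) * (\<bar>x\<bar> + k / m)"
      by (simp add: s_def power2_eq_square algebra_simps abs_mult_self)
    also have "\<dots> \<le> (1 / m) * 2"
      using k x by (intro mult_mono) auto
    finally show "x\<^sup>2 - 2 / m \<le> (of_int (s * k) / m)\<^sup>2"
      by simp
  qed
qed

lemma unit_vector_grid_approx:
  fixes \<rho> :: "nat \<Rightarrow> real"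
  assumes m: "0 < m" and \<rho>: "(\<Sum>j<T. (\<rho> j)\<^sup>2) = 1"
  obtains u where "u \<in> {..<T} \<rightarrow>\<^sub>E grid m" "\<And>j. j < T \<Longrightarrow> \<bar>\<rho> j - u j\<bar> \<le> 1 / m"
    "1 - 2 * real T / m \<le> (\<Sum>j<T. (u j)\<^sup>2)"
proof -
  have "\<bar>\<rho> j\<bar> \<le> 1" if "j < T" for j
  proof -
    have "(\<rho> j)\<^sup>2 \<le> (\<Sum>j<T. (\<rho> j)\<^sup>2)"
      using that by (intro member_le_sum) auto
    then show ?thesis
      using \<rho> by (simp add: abs_square_le_1)
  qed
  then have "\<forall>j \<in> {..<T}. \<exists>y. y \<in> grid m \<and> \<bar>\<rho> j - y\<bar> \<le> 1 / m \<and> (\<rho> j)\<^sup>2 - 2 / m \<le> y\<^sup>2"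
    using grid_approx[OF m] by (metis lessThan_iff)
  then obtain f where f: "\<And>j. j < T \<Longrightarrow> f j \<in> grid m \<and> \<bar>\<rho> j - f j\<bar> \<le> 1 / m \<and> (\<rho> j)\<^sup>2 - 2 / m \<le> (f j)\<^sup>2"
    by (metis lessThan_iff)
  show ?thesis
  proof
    show "restrict f {..<T} \<in> {..<T} \<rightarrow>\<^sub>E grid m"
      using f by auto
    show "\<bar>\<rho> j - restrict f {..<T} j\<bar> \<le> 1 / m" if "j < T" for j
      using f that by simp
    have "(\<Sum>j<T. (\<rho> j)\<^sup>2 - 2 / m) \<le> (\<Sum>j<T. (restrict f {..<T} j)\<^sup>2)"
      using f by (intro sum_mono) simp
    then show "1 - 2 * real T / m \<le> (\<Sum>j<T. (restrict f {..<T} j)\<^sup>2)"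
      by (simp add: sum_subtractf \<rho> mult.commute)
  qed
qed

lemma sum_mult_perturb_le:
  fixes \<rho> u x :: "nat \<Rightarrow> real" and T :: nat and K :: real
  assumes close: "\<And>j. j < T \<Longrightarrow> \<bar>\<rho> j - u j\<bar> \<le> \<delta>" and x: "(\<Sum>j<T. (x j)\<^sup>2) \<le> K"
  shows "\<bar>(\<Sum>j<T. \<rho> j * x j) - (\<Sum>j<T. u j * x j)\<bar> \<le> \<delta> * sqrt (T * K)"
proof (cases "T = 0")
  case False
  then have "0 \<le> \<delta>"
    using close[of 0] by simp
  have "0 \<le> K"
    using x by (meson order.trans sum_nonneg zero_le_power2)
  have "(\<Sum>j<T. \<rho> j * x j) - (\<Sum>j<T. u j * x j) = (\<Sum>j<T. (\<rho> j - u j) * x j)"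
    by (simp add: sum_subtractf left_diff_distrib)
  also have "\<dots>\<^sup>2 \<le> (\<Sum>j<T. (\<rho> j - u j)\<^sup>2) * (\<Sum>j<T. (x j)\<^sup>2)"
    by (rule Cauchy_Schwarz_ineq_sum)
  also have "\<dots> \<le> (\<Sum>j<T. \<delta>\<^sup>2) * K"
    using close x \<open>0 \<le> \<delta>\<close> by (intro mult_mono sum_mono sum_nonneg) (auto simp: power2_le_iff_abs_le)
  also have "\<dots> = (\<delta> * sqrt (T * K))\<^sup>2"
    using \<open>0 \<le> K\<close> by (simp add: power_mult_distrib)
  finally have "((\<Sum>j<T. \<rho> j * x j) - (\<Sum>j<T. u j * x j))\<^sup>2 \<le> (\<delta> * sqrt (T * K))\<^sup>2" .
  moreover have "0 \<le> \<delta> * sqrt (T * K)"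
    using \<open>0 \<le> \<delta>\<close> \<open>0 \<le> K\<close> by simp
  ultimately show ?thesis
    by (metis abs_le_square_iff abs_of_nonneg)
qed simp

lemma half_norm_le_if_good_entry:
  fixes m :: nat
  assumes s: "0 < s" and m: "0 < m" and K: "T * K \<le> (m / 20)\<^sup>2"
    and close: "\<And>j. j < T \<Longrightarrow> \<bar>r j / s - u j\<bar> \<le> 1 / m" and good: "good_entry T u K \<xi> l"
  shows "s / 2 \<le> (\<Sum>j<T. r j * \<xi> (j, l))"
proof -
  have "\<bar>(\<Sum>j<T. r j / s * \<xi> (j, l)) - (\<Sum>j<T. u j * \<xi> (j, l))\<bar> \<le> 1 / m * sqrt (T * K)"
    using close good by (intro sum_mult_perturb_le) (auto simp: good_entry_def)
  also have "\<dots> \<le> 1 / m * (m / 20)"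
    using K m by (intro mult_left_mono real_le_lsqrt) auto
  finally have "\<bar>(\<Sum>j<T. r j / s * \<xi> (j, l)) - (\<Sum>j<T. u j * \<xi> (j, l))\<bar> \<le> 1/20"
    using m by simp
  moreover have "11/20 \<le> (\<Sum>j<T. u j * \<xi> (j, l))"
    using good by (simp add: good_entry_def)
  ultimately have "1/2 \<le> (\<Sum>j<T. r j / s * \<xi> (j, l))"
    unfolding abs_le_iff by linarith
  then have "s * (1/2) \<le> s * (\<Sum>j<T. r j / s * \<xi> (j, l))"
    using s by (intro mult_left_mono) auto
  with s show ?thesis
    by (simp add: sum_distrib_left)
qed

lemma good_event_if_many_good_entries:
  assumes \<xi>: "\<xi> \<in> space (gauss_family T n)" and m: "0 < m" "100 * T \<le> m" and K: "T * K \<le> (m / 20)\<^sup>2"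
    and many: "\<And>u. u \<in> {..<T} \<rightarrow>\<^sub>E grid m \<Longrightarrow> 49/50 \<le> (\<Sum>j<T. (u j)\<^sup>2) \<Longrightarrow>
                 n / 20 \<le> card {l \<in> {..<n}. good_entry T u K \<xi> l}"
  shows "\<xi> \<in> good_event T n"
proof -
  have "\<exists>L \<subseteq> {..<n}. n / 20 \<le> card L \<and> (\<forall>l\<in>L. sqrt (\<Sum>j<T. (r j)\<^sup>2) / 2 \<le> (\<Sum>j<T. r j * \<xi> (j, l)))"
    for r
  proof (cases "(\<Sum>j<T. (r j)\<^sup>2) = 0")
    case True
    then have "\<forall>j<T. r j = 0"
      by (simp add: sum_nonneg_eq_0_iff)
    with True show ?thesis
      by (intro exI[of _ "{..<n}"]) simp
  next
    case False
    define s where "s = sqrt (\<Sum>j<T. (r j)\<^sup>2)"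
    have "0 < s"
      using False by (simp add: s_def sum_nonneg order_less_le)
    have "(\<Sum>j<T. (r j / s)\<^sup>2) = (\<Sum>j<T. (r j)\<^sup>2) / s\<^sup>2"
      by (simp add: power_divide sum_divide_distrib)
    then have "(\<Sum>j<T. (r j / s)\<^sup>2) = 1"
      using False by (simp add: s_def sum_nonneg)
    then obtain u where u: "u \<in> {..<T} \<rightarrow>\<^sub>E grid m"
      "\<And>j. j < T \<Longrightarrow> \<bar>r j / s - u j\<bar> \<le> 1 / m" "1 - 2 * real T / m \<le> (\<Sum>j<T. (u j)\<^sup>2)"
      by (rule unit_vector_grid_approx[OF m(1)]) blast
    have "2 * real T / m \<le> 1/50"
      using m by (simp add: divide_le_eq)
    then have "n / 20 \<le> card {l \<in> {..<n}. good_entry T u K \<xi> l}"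
      using u by (intro many) auto
    moreover have "s / 2 \<le> (\<Sum>j<T. r j * \<xi> (j, l))" if "good_entry T u K \<xi> l" for l
      using half_norm_le_if_good_entry[OF \<open>0 < s\<close> m(1) K u(2) that] .
    ultimately show ?thesis
      unfolding s_def by (intro exI[of _ "{l \<in> {..<n}. good_entry T u K \<xi> l}"]) auto
  qed
  with \<xi> show ?thesis
    by (simp add: good_event_def)
qed

lemma ln_ge_of_pow2_le:
  assumes "2 ^ k \<le> (x :: real)"
  shows "2/3 * k \<le> ln x"
proof -
  have "2/3 * k \<le> k * ln 2"
    using mult_left_mono[OF ln2_ge_two_thirds, of "real k"] by (simp add: mult.commute)
  also have "\<dots> = ln (2 ^ k)"
    by (simp add: ln_realpow)
  also have "\<dots> \<le> ln x"
    using assms by (intro ln_mono) auto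
  finally show ?thesis .
qed

lemma dimension_gt_of_ln_bound:
  fixes T n :: nat
  assumes T: "1 \<le> T" and bound: "real T * ln (2 * real n) < real n / 32"
  shows "150 * T < n"
proof -
  have "0 < n"
    using bound by (cases n) auto
  then have "1 * ln (2 * real n) \<le> real T * ln (2 * real n)"
    using T by (intro mult_right_mono) auto
  then have ln_less: "ln (2 * real n) < real n / 32"
    using bound by linarith
  \<comment> \<open>each lower bound on \<open>n\<close> improves the lower bound on \<open>ln (2n)\<close>, and conversely\<close>
  have grow: "64/3 * k < real n" if "2 ^ k \<le> 2 * real n" for k
    using ln_ge_of_pow2_le[OF that] ln_less by linarith
  have "64/3 < real n"
    using grow[of 1] \<open>0 < n\<close> by simp
  then have "320/3 < real n"
    using grow[of 5] by simp
  then have "448/3 < real n"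
    using grow[of 7] by simp
  then have "2/3 * 8 \<le> ln (2 * real n)"
    using ln_ge_of_pow2_le[of 8 "2 * real n"] by simp
  then have "real T * (16/3) < real n / 32"
    using bound mult_left_mono[of "16/3" "ln (2 * real n)" "real T"] by simp
  then show ?thesis
    by simp
qed

definition grid_net :: "nat \<Rightarrow> nat \<Rightarrow> (nat \<Rightarrow> real) set" where
  "grid_net T m = {u \<in> {..<T} \<rightarrow>\<^sub>E grid m. 49/50 \<le> (\<Sum>j<T. (u j)\<^sup>2)}"

definition net_failure :: "nat \<Rightarrow> nat \<Rightarrow> nat \<Rightarrow> (nat \<times> nat \<Rightarrow> real) set" where
  "net_failure T n m = (\<Union>u \<in> grid_net T m. few_good_entries T n u ((m / 20)\<^sup>2 / T))"

lemma finite_grid_net: "finite (grid_net T m)"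
  by (rule finite_subset[of _ "{..<T} \<rightarrow>\<^sub>E grid m"]) (auto simp: grid_net_def finite_PiE finite_grid)

lemma card_grid_net_le: "card (grid_net T m) \<le> (2 * m + 1) ^ T"
proof -
  have "card (grid_net T m) \<le> card ({..<T} \<rightarrow>\<^sub>E grid m)"
    by (rule card_mono) (auto simp: grid_net_def finite_PiE finite_grid)
  also have "\<dots> \<le> (2 * m + 1) ^ T"
    using card_PiE_grid_le[of "{..<T}" m] by simp
  finally show ?thesis .
qed

lemma sets_net_failure: "net_failure T n m \<in> sets (gauss_family T n)"
  unfolding net_failure_def by (intro sets.finite_UN finite_grid_net sets_few_good_entries)

lemma prob_net_failure_le:
  assumes T: "0 < T" and n: "0 < n" and m: "150 * T \<le> m"
  shows "prob_space.prob (gauss_family T n) (net_failure T n m) \<le> (2 * real m + 1) ^ T * exp (- real n / 32)"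
proof -
  interpret prob_space "gauss_family T n" by (rule prob_space_gauss_family)
  let ?K = "(m / 20)\<^sup>2 / T"
  have K: "0 < ?K" "T / ?K \<le> 1/50"
  proof -
    have "0 < m"
      using T m by linarith
    have "20000 * (real T)\<^sup>2 \<le> (150 * real T)\<^sup>2"
      by (simp add: power_mult_distrib)
    also have "\<dots> \<le> (real m)\<^sup>2"
      using m by (intro power_mono) auto
    finally have "20000 * (real T)\<^sup>2 \<le> (real m)\<^sup>2" .
    moreover have "T / ?K = 400 * (real T)\<^sup>2 / (real m)\<^sup>2"
      by (simp add: power_divide power2_eq_square)
    ultimately show "T / ?K \<le> 1/50"
      using \<open>0 < m\<close> by (simp add: divide_le_eq)
    show "0 < ?K"
      using T \<open>0 < m\<close> by simp
  qed
  have "prob (net_failure T n m) \<le> (\<Sum>u \<in> grid_net T m. prob (few_good_entries T n u ?K))"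
    unfolding net_failure_def using finite_grid_net sets_few_good_entries by (rule measure_UNION_le)
  also have "\<dots> \<le> card (grid_net T m) * exp (- real n / 32)"
    using prob_few_good_entries_le[OF n _ K] by (intro sum_bounded_above) (auto simp: grid_net_def)
  also have "\<dots> \<le> (2 * real m + 1) ^ T * exp (- real n / 32)"
  proof (rule mult_right_mono)
    have "real (card (grid_net T m)) \<le> real ((2 * m + 1) ^ T)"
      using card_grid_net_le by (simp only: of_nat_le_iff)
    then show "real (card (grid_net T m)) \<le> (2 * real m + 1) ^ T"
      by (simp add: add.commute)
  qed simp
  finally show ?thesis .
qed

lemma compl_net_failure_subset_good_event:
  assumes T: "0 < T" and m: "150 * T \<le> m"
  shows "space (gauss_family T n) - net_failure T n m \<subseteq> good_event T n"
proof
  fix \<xi> assume \<xi>: "\<xi> \<in> space (gauss_family T n) - net_failure T n m"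
  show "\<xi> \<in> good_event T n"
  proof (rule good_event_if_many_good_entries)
    show "n / 20 \<le> card {l \<in> {..<n}. good_entry T u ((m / 20)\<^sup>2 / T) \<xi> l}"
      if "u \<in> {..<T} \<rightarrow>\<^sub>E grid m" "49/50 \<le> (\<Sum>j<T. (u j)\<^sup>2)" for u
    proof -
      have "\<xi> \<notin> few_good_entries T n u ((m / 20)\<^sup>2 / T)"
        using \<xi> that unfolding net_failure_def grid_net_def by blast
      with \<xi> show ?thesis
        by (simp add: few_good_entries_def not_less)
    qed
    show "0 < m" "100 * T \<le> m"
      using T m by linarith+
    show "real T * ((m / 20)\<^sup>2 / T) \<le> (m / 20)\<^sup>2"
      using T by simp
  qed (use \<xi> in blast)
qed

lemma grid_net_union_bound_le_exp:
  assumes "1 \<le> n"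
  shows "(2 * real (n - 1) + 1) ^ T * exp (- real n / 32) \<le> exp (real T * ln (2 * real n) - real n / 32)"
proof -
  have "2 * real (n - 1) + 1 \<le> 2 * real n"
    using assms by (simp add: of_nat_diff)
  then have "(2 * real (n - 1) + 1) ^ T * exp (- real n / 32) \<le> (2 * real n) ^ T * exp (- real n / 32)"
    by (intro mult_right_mono power_mono) simp_all
  also have "\<dots> = exp (real T * ln (2 * real n)) * exp (- real n / 32)"
    using assms by (simp add: exp_of_nat_mult)
  also have "\<dots> = exp (real T * ln (2 * real n) - real n / 32)"
    by (simp add: exp_add[symmetric])
  finally show ?thesis .
qed

lemma good_event_0: "good_event 0 n = space (gauss_family 0 n)"
  by (auto simp: good_event_def intro!: exI[of _ "{..<n}"])

theorem mainTheorem6: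
  fixes T n :: nat
  assumes "n \<ge> 1"
  shows "\<exists>E \<in> sets (gauss_family T n). E \<subseteq> good_event T n \<and>
           measure (gauss_family T n) E \<ge> 1 - exp (real T * ln (2 * real n) - real n / 32)"
proof -
  interpret prob_space "gauss_family T n" by (rule prob_space_gauss_family)
  consider "real n / 32 \<le> real T * ln (2 * real n)" | "T = 0"
    | "0 < T" "real T * ln (2 * real n) < real n / 32"
    by linarith
  then show ?thesis
  proof cases
    case 1
    then show ?thesis
      by (intro bexI[of _ "{}"]) simp_all
  next
    case 2
    then show ?thesis
      by (intro bexI[of _ "space (gauss_family T n)"])
        (simp_all add: good_event_0 prob_space.prob_space[OF prob_space_gauss_family])
  next
    case 3
    define m where "m = n - 1"
    have m: "150 * T \<le> m"
      using dimension_gt_of_ln_bound[of T n] 3 by (simp add: m_def)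
    have "prob (net_failure T n m) \<le> (2 * real m + 1) ^ T * exp (- real n / 32)"
      using prob_net_failure_le[of T n m] 3(1) m assms by simp
    also have "\<dots> \<le> exp (real T * ln (2 * real n) - real n / 32)"
      unfolding m_def by (rule grid_net_union_bound_le_exp[OF assms])
    finally have "1 - exp (real T * ln (2 * real n) - real n / 32)
        \<le> prob (space (gauss_family T n) - net_failure T n m)"
      using prob_compl[OF sets_net_failure] by simp
    then show ?thesis
      using compl_net_failure_subset_good_event[OF 3(1) m] sets_net_failure by blast
  qed
qed

end
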